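(* Consider an HTSP instance in which all speeds are powers of two, and let $M>0$ be at least its optimal makespan. Let $\mathcal H=\bigcup_{i\ge0}H_i$ be a Level-Prim tree with respect to $M$. Then: (a) along every path in $\mathcal H$ from $r$ to a leaf, the vertex levels are non-decreasing; (b) for every $i\ge0$, $\sum_{j\ge i}d(H_j)\le 8M\sum_{j\ge i-1}2^j\mu_j$.
   Context: HTSP: the input is a finite metric $(V,d)$, a depot $r$, and vehicles with speeds $\ge1$. A solution consists of tours from $r$ covering $V$, and its makespan is $\max_i d(\tau_i)/\lambda_i$. Here all speeds are powers of two, $\mu_j$ is the number of vehicles of speed $2^j$, and $\mu_{-1}=0$. Levels: $V_0=\{u:d(r,u)\le M\}$, and for $i\ge1$, $V_i=\{u:2^{i-1}M<d(r,u)\le2^iM\}$. Write $V_{\le i}=\bigcup_{j\le i}V_j$ and $V_{<i}=V_{\le i-1}$, with $V_{<0}=\emptyset$. $G$ is the complete graph on $V$ weighted by $d$. $G[U]$ is the induced subgraph, and $G/U$ contracts $U$ to a single vertex, keeping parallel edges. Level-Prim tree: $H_i$ is a minimum spanning tree of $G[V_{\le i}]/V_{<i}$, viewed as edges of $G$, and $\mathcal H=\bigcup_i H_i$. *)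

theory Defs
  imports Complex_Main
begin

definition finite_metric :: "'a set \<Rightarrow> ('a \<Rightarrow> 'a \<Rightarrow> real) \<Rightarrow> bool" where
  "finite_metric V d \<longleftrightarrow> finite V \<and>
     (\<forall>u\<in>V. \<forall>v\<in>V. d u v \<ge> 0 \<and> d u v = d v u \<and> (d u v = 0 \<longleftrightarrow> u = v)) \<and>
     (\<forall>u\<in>V. \<forall>v\<in>V. \<forall>w\<in>V. d u w \<le> d u v + d v w)"

definition walk_len :: "('a \<Rightarrow> 'a \<Rightarrow> real) \<Rightarrow> 'a list \<Rightarrow> real" where
  "walk_len d p = (\<Sum>j<length p - 1. d (p ! j) (p ! Suc j))"

definition tour_len :: "('a \<Rightarrow> 'a \<Rightarrow> real) \<Rightarrow> 'a \<Rightarrow> 'a list \<Rightarrow> real" where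
  "tour_len d r t = walk_len d (r # t @ [r])"

text \<open>Vehicles are given by the list ks of speed exponents: vehicle i has speed 2^(ks!i).
  A solution assigns one tour to every vehicle; together the tours cover V.\<close>
definition htsp_solution :: "'a set \<Rightarrow> 'a \<Rightarrow> nat list \<Rightarrow> 'a list list \<Rightarrow> bool" where
  "htsp_solution V r ks ts \<longleftrightarrow> length ts = length ks \<and>
     (\<forall>t\<in>set ts. set t \<subseteq> V) \<and> V \<subseteq> insert r (\<Union>t\<in>set ts. set t)"

definition makespan :: "('a \<Rightarrow> 'a \<Rightarrow> real) \<Rightarrow> 'a \<Rightarrow> nat list \<Rightarrow> 'a list list \<Rightarrow> real" where
  "makespan d r ks ts = Max ((\<lambda>i. tour_len d r (ts ! i) / 2 ^ (ks ! i)) ` {..<length ks})"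

definition htsp_opt :: "'a set \<Rightarrow> ('a \<Rightarrow> 'a \<Rightarrow> real) \<Rightarrow> 'a \<Rightarrow> nat list \<Rightarrow> real" where
  "htsp_opt V d r ks = Inf {makespan d r ks ts | ts. htsp_solution V r ks ts}"

definition mu :: "nat list \<Rightarrow> nat \<Rightarrow> nat" where
  "mu ks j = count_list ks j"

definition level_set :: "'a set \<Rightarrow> ('a \<Rightarrow> 'a \<Rightarrow> real) \<Rightarrow> 'a \<Rightarrow> real \<Rightarrow> nat \<Rightarrow> 'a set" where
  "level_set V d r M i =
     (if i = 0 then {u\<in>V. d r u \<le> M}
      else {u\<in>V. 2 ^ (i - 1) * M < d r u \<and> d r u \<le> 2 ^ i * M})"

text \<open>V_{<i}; in particular V_{<0} is empty. V_{\<le>i} = V_{<i+1}.\<close>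
definition levels_below :: "'a set \<Rightarrow> ('a \<Rightarrow> 'a \<Rightarrow> real) \<Rightarrow> 'a \<Rightarrow> real \<Rightarrow> nat \<Rightarrow> 'a set" where
  "levels_below V d r M i = (\<Union>j<i. level_set V d r M j)"

text \<open>Edges of G are represented as pairs (u,v) with u \<noteq> v; orientation is irrelevant.
  Contracting U maps u to None if u \<in> U and to Some u otherwise; every edge of G[S]
  survives (parallel edges kept), edges inside U become loops.\<close>

definition cnode :: "'a set \<Rightarrow> 'a \<Rightarrow> 'a option" where
  "cnode U u = (if u \<in> U then None else Some u)"

definition cadj :: "'a set \<Rightarrow> ('a \<times> 'a) set \<Rightarrow> 'a option \<Rightarrow> 'a option \<Rightarrow> bool" where
  "cadj U F x y \<longleftrightarrow> (\<exists>e\<in>F. (cnode U (fst e) = x \<and> cnode U (snd e) = y) \<or>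
                              (cnode U (fst e) = y \<and> cnode U (snd e) = x))"

definition graph_edges :: "'a set \<Rightarrow> ('a \<times> 'a) set" where
  "graph_edges S = {(u, v). u \<in> S \<and> v \<in> S \<and> u \<noteq> v}"

text \<open>Spanning tree of the multigraph G[S]/U: loop-free, connected, and acyclic
  (every edge is a bridge).\<close>
definition contr_spanning_tree :: "'a set \<Rightarrow> 'a set \<Rightarrow> ('a \<times> 'a) set \<Rightarrow> bool" where
  "contr_spanning_tree S U F \<longleftrightarrow>
     F \<subseteq> graph_edges S \<and>
     (\<forall>e\<in>F. cnode U (fst e) \<noteq> cnode U (snd e)) \<and>
     (\<forall>x\<in>cnode U ` S. \<forall>y\<in>cnode U ` S. (cadj U F)\<^sup>*\<^sup>* x y) \<and>
     (\<forall>e\<in>F. \<not> (cadj U (F - {e}))\<^sup>*\<^sup>* (cnode U (fst e)) (cnode U (snd e)))"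

definition edge_weight :: "('a \<Rightarrow> 'a \<Rightarrow> real) \<Rightarrow> ('a \<times> 'a) set \<Rightarrow> real" where
  "edge_weight d F = (\<Sum>e\<in>F. d (fst e) (snd e))"

definition contr_mst :: "('a \<Rightarrow> 'a \<Rightarrow> real) \<Rightarrow> 'a set \<Rightarrow> 'a set \<Rightarrow> ('a \<times> 'a) set \<Rightarrow> bool" where
  "contr_mst d S U F \<longleftrightarrow> contr_spanning_tree S U F \<and>
     (\<forall>F'. contr_spanning_tree S U F' \<longrightarrow> edge_weight d F \<le> edge_weight d F')"

text \<open>H i is a minimum spanning tree of G[V_{\<le>i}]/V_{<i}.\<close>
definition level_prim :: "'a set \<Rightarrow> ('a \<Rightarrow> 'a \<Rightarrow> real) \<Rightarrow> 'a \<Rightarrow> real \<Rightarrow> (nat \<Rightarrow> ('a \<times> 'a) set) \<Rightarrow> bool" where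
  "level_prim V d r M H \<longleftrightarrow>
     (\<forall>i. contr_mst d (levels_below V d r M (Suc i)) (levels_below V d r M i) (H i))"

definition tree_degree :: "('a \<times> 'a) set \<Rightarrow> 'a \<Rightarrow> nat" where
  "tree_degree T v = card {e\<in>T. fst e = v \<or> snd e = v}"

definition simple_path_in :: "('a \<times> 'a) set \<Rightarrow> 'a list \<Rightarrow> bool" where
  "simple_path_in T p \<longleftrightarrow> p \<noteq> [] \<and> distinct p \<and>
     (\<forall>j < length p - 1. (p ! j, p ! Suc j) \<in> T \<or> (p ! Suc j, p ! j) \<in> T)"

end

theory Submission
  imports Defs
begin

(* (a) Every edge of the tree H_i has its higher endpoint on level i.  If a simple path from r
   descended for the first time along an edge e leaving level A, the vertices of level A just
   before e on the path, together with the vertex of lower level preceding them, would connect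
   both endpoints of e in the contraction G[V_<=A]/V_<A without using e; so e would not be a
   bridge of H_A.  This holds for every simple path from r, not only for paths ending in a leaf.

   (b) Since the optimum is below 2M there are closed walks tau_v from r, one per vehicle,
   covering V, with length(tau_v) <= 2^(k_v) 2M.  For a level j, shortcutting every tau_v to
   V_<=j and keeping the edges whose higher endpoint lies on level j gives a connected edge set
   of G[V_<=j]/V_<j, so d(H_j) is at most the total length of these edges (the "shortcut costs").
   A potential argument along each walk, using the dyadic "bands" of the distance from r, bounds
   the shortcut costs of one walk summed over all levels by three times its length; a walk of
   speed 2^k never leaves V_<=k and so costs nothing on levels j > k.  Summing over the vehicles
   gives the bound with the constant 6M, hence with 8M. *)

section \<open>Levels of vertices\<close>

definition vertex_level :: "('a \<Rightarrow> 'a \<Rightarrow> real) \<Rightarrow> 'a \<Rightarrow> real \<Rightarrow> 'a \<Rightarrow> nat" where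
  "vertex_level d r M u = (LEAST i. d r u \<le> 2 ^ i * M)"

lemma vertex_level_le_iff:
  assumes "M > 0"
  shows "vertex_level d r M u \<le> j \<longleftrightarrow> d r u \<le> 2 ^ j * M"
proof
  obtain n where "d r u / M < 2 ^ n" using real_arch_pow[of 2 "d r u / M"] by auto
  hence ex: "d r u \<le> 2 ^ n * M" using assms by (simp add: divide_less_eq)
  have least: "d r u \<le> 2 ^ vertex_level d r M u * M"
    unfolding vertex_level_def by (rule LeastI[of "\<lambda>i. d r u \<le> 2 ^ i * M", OF ex])
  assume "vertex_level d r M u \<le> j"
  hence "(2::real) ^ vertex_level d r M u \<le> 2 ^ j" by (simp add: power_increasing)
  with least show "d r u \<le> 2 ^ j * M"
    using assms by (meson dual_order.trans mult_right_mono less_imp_le)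
next
  assume "d r u \<le> 2 ^ j * M"
  thus "vertex_level d r M u \<le> j" unfolding vertex_level_def by (rule Least_le)
qed

lemma vertex_level_gt_iff:
  "M > 0 \<Longrightarrow> j < vertex_level d r M u \<longleftrightarrow> 2 ^ j * M < d r u"
  using vertex_level_le_iff[of M d r u j] by auto

lemma level_set_eq:
  assumes "M > 0"
  shows "level_set V d r M i = {u\<in>V. vertex_level d r M u = i}"
proof (cases i)
  case 0
  then show ?thesis using vertex_level_le_iff[OF assms, of d r _ 0] by (auto simp: level_set_def)
next
  case (Suc k)
  have "vertex_level d r M u = i \<longleftrightarrow> 2 ^ k * M < d r u \<and> d r u \<le> 2 ^ i * M" for u
    using vertex_level_le_iff[OF assms, of d r u i] vertex_level_gt_iff[OF assms, of k d r u] Suc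
    by auto
  then show ?thesis using Suc by (auto simp: level_set_def)
qed

lemma levels_below_eq:
  "M > 0 \<Longrightarrow> levels_below V d r M i = {u\<in>V. vertex_level d r M u < i}"
  unfolding levels_below_def by (auto simp: level_set_eq)

lemma metric_nonneg: "finite_metric V d \<Longrightarrow> u \<in> V \<Longrightarrow> v \<in> V \<Longrightarrow> 0 \<le> d u v"
  unfolding finite_metric_def by auto

lemma metric_sym: "finite_metric V d \<Longrightarrow> u \<in> V \<Longrightarrow> v \<in> V \<Longrightarrow> d u v = d v u"
  unfolding finite_metric_def by auto

lemma metric_refl: "finite_metric V d \<Longrightarrow> u \<in> V \<Longrightarrow> d u u = 0"
  unfolding finite_metric_def by auto

lemma metric_triangle:
  "finite_metric V d \<Longrightarrow> u \<in> V \<Longrightarrow> v \<in> V \<Longrightarrow> w \<in> V \<Longrightarrow> d u w \<le> d u v + d v w"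
  unfolding finite_metric_def by auto

lemma vertex_level_depot:
  "finite_metric V d \<Longrightarrow> r \<in> V \<Longrightarrow> M > 0 \<Longrightarrow> vertex_level d r M r = 0"
  using vertex_level_le_iff[of M d r r 0] metric_refl[of V d r] by simp

fun walk_edges :: "'a list \<Rightarrow> ('a \<times> 'a) list" where
  "walk_edges (x # y # zs) = (x, y) # walk_edges (y # zs)"
| "walk_edges _ = []"

lemma walk_edges_snoc:
  "walk_edges (xs @ [y]) = walk_edges xs @ (if xs = [] then [] else [(last xs, y)])"
  by (induction xs rule: walk_edges.induct) auto

lemma walk_edges_vertices: "e \<in> set (walk_edges xs) \<Longrightarrow> fst e \<in> set xs \<and> snd e \<in> set xs"
  by (induction xs rule: walk_edges.induct) auto

lemma walk_len_Cons: "walk_len d (x # y # zs) = d x y + walk_len d (y # zs)"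
  unfolding walk_len_def by (simp add: sum.lessThan_Suc_shift del: sum.lessThan_Suc)

lemma walk_len_edges: "walk_len d p = sum_list (map (\<lambda>e. d (fst e) (snd e)) (walk_edges p))"
  by (induction p rule: walk_edges.induct) (simp add: walk_len_Cons, simp_all add: walk_len_def)

lemma walk_len_nonneg: "finite_metric V d \<Longrightarrow> set p \<subseteq> V \<Longrightarrow> 0 \<le> walk_len d p"
  unfolding walk_len_edges
  by (rule sum_list_nonneg) (auto dest!: walk_edges_vertices intro: metric_nonneg)

lemma walk_detour:
  assumes met: "finite_metric V d"
  shows "set p \<subseteq> V \<Longrightarrow> u \<in> set p \<Longrightarrow> d (hd p) u + d u (last p) \<le> walk_len d p"
proof (induction p arbitrary: u rule: walk_edges.induct)
  case (1 x y zs)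
  have V: "x \<in> V" "y \<in> V" "u \<in> V" "last (y # zs) \<in> V" using 1(2,3) by auto
  have IH: "d y w + d w (last (y # zs)) \<le> walk_len d (y # zs)" if "w \<in> set (y # zs)" for w
    using 1 that by simp
  show ?case
  proof (cases "u = x")
    case True
    have "d x (last (y # zs)) \<le> d x y + d y (last (y # zs))" using metric_triangle[OF met V(1,2,4)] .
    moreover have "d y y = 0" "d x x = 0" using metric_refl[OF met] V by auto
    ultimately show ?thesis using True IH[of y] by (simp add: walk_len_Cons)
  next
    case False
    then have "d y u + d u (last (y # zs)) \<le> walk_len d (y # zs)" using IH 1(3) by simp
    moreover have "d x u \<le> d x y + d y u" using metric_triangle[OF met V(1,2,3)] .
    ultimately show ?thesis by (simp add: walk_len_Cons)
  qed
next
  case ("2_2" v)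
  then show ?case using metric_refl[OF met, of v] by (simp add: walk_len_def)
qed simp

lemma walk_edges_rtranclp:
  assumes "\<forall>e\<in>set (walk_edges xs). R\<^sup>*\<^sup>* (f (fst e)) (f (snd e))" "u \<in> set xs"
  shows "R\<^sup>*\<^sup>* (f (hd xs)) (f u)"
  using assms
proof (induction xs rule: walk_edges.induct)
  case (1 x y zs)
  show ?case
  proof (cases "u = x")
    case False
    then have "R\<^sup>*\<^sup>* (f y) (f u)" using 1 by simp
    moreover have "R\<^sup>*\<^sup>* (f x) (f y)" using 1(2) by simp
    ultimately show ?thesis by (simp add: rtranclp_trans)
  qed simp
qed auto

lemma rtranclp_along_indices:
  assumes "\<And>t. a \<le> t \<Longrightarrow> t < b \<Longrightarrow> R (f t) (f (Suc t))" "a \<le> b"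
  shows "R\<^sup>*\<^sup>* (f a) (f b)"
  using assms
proof (induction b)
  case (Suc b)
  show ?case
  proof (cases "a = Suc b")
    case False
    then have "R\<^sup>*\<^sup>* (f a) (f b)" using Suc by simp
    then show ?thesis using Suc.prems(1)[of b] Suc.prems(2) False by simp
  qed simp
qed simp

lemma sum_list_count_real:
  "sum_list (map (g :: 'b \<Rightarrow> real) xs) = (\<Sum>x\<in>set xs. real (count_list xs x) * g x)"
proof (induction xs)
  case (Cons x xs)
  have "(\<Sum>y\<in>set (x # xs). real (count_list (x # xs) y) * g y)
      = (\<Sum>y\<in>set (x # xs). real (count_list xs y) * g y + (if x = y then g y else 0))"
    by (rule sum.cong) (auto simp: algebra_simps)
  also have "\<dots> = (\<Sum>y\<in>set (x # xs). real (count_list xs y) * g y) + g x"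
    by (simp add: sum.distrib)
  also have "(\<Sum>y\<in>set (x # xs). real (count_list xs y) * g y) = (\<Sum>y\<in>set xs. real (count_list xs y) * g y)"
    by (cases "x \<in> set xs") (simp_all add: insert_absorb)
  finally show ?case using Cons by simp
qed simp

lemma sum_set_le_sum_list:
  fixes f :: "'b \<Rightarrow> real"
  assumes "\<forall>x\<in>set xs. 0 \<le> f x"
  shows "sum f (set xs) \<le> sum_list (map f xs)"
  using assms by (induction xs) (auto simp: sum.insert_if)

lemma last_rise:
  fixes f :: "nat \<Rightarrow> nat"
  assumes mono: "\<And>t t'. t \<le> t' \<Longrightarrow> t' \<le> m \<Longrightarrow> f t \<le> f t'" and rise: "f 0 < f m"
  obtains s where "0 < s" "s \<le> m" "f (s - 1) < f m" "\<And>t. s \<le> t \<Longrightarrow> t \<le> m \<Longrightarrow> f t = f m"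
proof
  define s where "s = (LEAST t. f t = f m)"
  have fs: "f s = f m" unfolding s_def by (rule LeastI[of _ m]) simp
  show sm: "s \<le> m" unfolding s_def by (rule Least_le) simp
  show s0: "0 < s" using fs rise by (cases s) auto
  have "f (s - 1) \<noteq> f m" using not_less_Least[of "s - 1" "\<lambda>t. f t = f m"] s0 unfolding s_def by simp
  moreover have "f (s - 1) \<le> f m" using mono[of "s - 1" m] sm by auto
  ultimately show "f (s - 1) < f m" by simp
  show "f t = f m" if "s \<le> t" "t \<le> m" for t
    using mono[OF that] mono[OF that(2) order_refl] fs by simp
qed

section \<open>Bands\<close>

text \<open>The bands of
  the dyadic intervals [2^j M, 2^(j+1) M] split the distance from the depot into pieces, one per
  level; they measure how far a walk advances inside the annulus of level j+1.\<close>
definition band :: "real \<Rightarrow> real \<Rightarrow> real" where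
  "band a t = min (max t a) (2 * a) - a"

lemma band_bounds: "0 \<le> a \<Longrightarrow> 0 \<le> band a t \<and> band a t \<le> a"
  by (auto simp: band_def min_def max_def)

lemma band_below: "0 \<le> a \<Longrightarrow> t \<le> a \<Longrightarrow> band a t = 0"
  by (auto simp: band_def min_def max_def)

lemma band_above: "0 \<le> a \<Longrightarrow> 2 * a \<le> t \<Longrightarrow> band a t = a"
  by (auto simp: band_def min_def max_def)

lemma band_le_excess: "0 \<le> a \<Longrightarrow> a \<le> t \<Longrightarrow> band a t \<le> t - a"
  by (auto simp: band_def min_def max_def)

lemma band_mono: "s \<le> t \<Longrightarrow> band a s \<le> band a t"
  by (auto simp: band_def min_def max_def)

lemma band_telescope:
  assumes "M > 0"
  shows "(\<Sum>j<N. band (2 ^ j * M) t) = min (max t M) (2 ^ N * M) - M"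
proof (induction N)
  case (Suc N)
  have step: "min (max t M) P - M + band P t = min (max t M) (2 * P) - M" if "M \<le> P" for P
    using that assms by (auto simp: band_def min_def max_def)
  have "M \<le> 2 ^ N * M" using assms by simp
  from step[OF this] show ?case using Suc by (simp add: mult.assoc)
qed (simp add: min_def max_def)

lemma band_variation:
  assumes "M > 0"
  shows "(\<Sum>j<N. \<bar>band (2 ^ j * M) s - band (2 ^ j * M) t\<bar>) \<le> \<bar>t - s\<bar>"
proof -
  have ordered: "(\<Sum>j<N. \<bar>band (2 ^ j * M) s - band (2 ^ j * M) t\<bar>) \<le> t - s" if "s \<le> t" for s t
  proof -
    have "(\<Sum>j<N. \<bar>band (2 ^ j * M) s - band (2 ^ j * M) t\<bar>)
        = (\<Sum>j<N. band (2 ^ j * M) t) - (\<Sum>j<N. band (2 ^ j * M) s)"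
      using band_mono[OF that] by (simp add: sum_subtractf[symmetric])
    also have "\<dots> \<le> t - s" unfolding band_telescope[OF assms] using that assms
      by (auto simp: min_def max_def)
    finally show ?thesis .
  qed
  show ?thesis
    using ordered[of s t] ordered[of t s] by (cases "s \<le> t") (auto simp: abs_minus_commute)
qed


section \<open>Spanning trees of contracted graphs\<close>

lemma cadj_sym: "cadj U F a b \<Longrightarrow> cadj U F b a"
  unfolding cadj_def by blast

lemma cadj_rtranclp_sym: "(cadj U F)\<^sup>*\<^sup>* a b \<Longrightarrow> (cadj U F)\<^sup>*\<^sup>* b a"
proof -
  have "symp (cadj U F)" by (rule sympI) (rule cadj_sym)
  then show "(cadj U F)\<^sup>*\<^sup>* a b \<Longrightarrow> (cadj U F)\<^sup>*\<^sup>* b a" by (rule sympD[OF symp_rtranclp])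
qed

lemma remove_nonbridge:
  assumes e: "(cadj U (F - {e}))\<^sup>*\<^sup>* (cnode U (fst e)) (cnode U (snd e))"
    and xy: "(cadj U F)\<^sup>*\<^sup>* x y"
  shows "(cadj U (F - {e}))\<^sup>*\<^sup>* x y"
proof -
  have "cadj U F \<le> (cadj U (F - {e}))\<^sup>*\<^sup>*"
  proof (intro predicate2I)
    fix a b assume "cadj U F a b"
    then obtain e' where e': "e' \<in> F" "(cnode U (fst e') = a \<and> cnode U (snd e') = b) \<or>
        (cnode U (fst e') = b \<and> cnode U (snd e') = a)" unfolding cadj_def by blast
    show "(cadj U (F - {e}))\<^sup>*\<^sup>* a b"
    proof (cases "e' = e")
      case False
      then have "cadj U (F - {e}) a b" using e' unfolding cadj_def by blast
      then show ?thesis by simp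
    next
      case True
      then show ?thesis using e' e cadj_rtranclp_sym[OF e] by auto
    qed
  qed
  then have "(cadj U F)\<^sup>*\<^sup>* \<le> (cadj U (F - {e}))\<^sup>*\<^sup>*"
    using rtranclp_mono[of "cadj U F" "(cadj U (F - {e}))\<^sup>*\<^sup>*"] by simp
  then show ?thesis using xy by (rule predicate2D)
qed

text \<open>Every finite connected loop-free edge set of G[S]/U contains a spanning tree:
  delete non-bridges as long as there are any.\<close>
lemma spanning_tree_subset:
  assumes "finite E" "E \<subseteq> graph_edges S" "\<forall>e\<in>E. cnode U (fst e) \<noteq> cnode U (snd e)"
    "\<forall>x\<in>cnode U ` S. \<forall>y\<in>cnode U ` S. (cadj U E)\<^sup>*\<^sup>* x y"
  shows "\<exists>F\<subseteq>E. contr_spanning_tree S U F"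
  using assms
proof (induction "card E" arbitrary: E rule: less_induct)
  case less
  show ?case
  proof (cases "\<forall>e\<in>E. \<not> (cadj U (E - {e}))\<^sup>*\<^sup>* (cnode U (fst e)) (cnode U (snd e))")
    case True
    then have "contr_spanning_tree S U E" using less.prems unfolding contr_spanning_tree_def by blast
    then show ?thesis by blast
  next
    case False
    then obtain e where e: "e \<in> E" "(cadj U (E - {e}))\<^sup>*\<^sup>* (cnode U (fst e)) (cnode U (snd e))"
      by blast
    have "\<exists>F\<subseteq>E - {e}. contr_spanning_tree S U F"
    proof (rule less.hyps)
      show "card (E - {e}) < card E" using e(1) less.prems(1) by (meson card_Diff1_less)
      show "\<forall>x\<in>cnode U ` S. \<forall>y\<in>cnode U ` S. (cadj U (E - {e}))\<^sup>*\<^sup>* x y"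
        using less.prems(4) remove_nonbridge[OF e(2)] by blast
    qed (use less.prems(1-3) in auto)
    then show ?thesis by blast
  qed
qed

lemma mst_weight_le_connected:
  assumes "contr_mst d S U H" "finite E" "E \<subseteq> graph_edges S"
    "\<forall>e\<in>E. cnode U (fst e) \<noteq> cnode U (snd e)"
    "\<forall>x\<in>cnode U ` S. \<forall>y\<in>cnode U ` S. (cadj U E)\<^sup>*\<^sup>* x y"
    "\<forall>e\<in>E. 0 \<le> d (fst e) (snd e)"
  shows "edge_weight d H \<le> edge_weight d E"
proof -
  obtain F where F: "F \<subseteq> E" "contr_spanning_tree S U F"
    using spanning_tree_subset[OF assms(2-5)] by blast
  have "edge_weight d H \<le> edge_weight d F" using assms(1) F(2) unfolding contr_mst_def by blast
  also have "\<dots> \<le> edge_weight d E" unfolding edge_weight_def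
    by (rule sum_mono2) (use assms(2,6) F(1) in auto)
  finally show ?thesis .
qed

section \<open>Charging the shortcut costs of a walk\<close>

context
  fixes V :: "'a set" and d :: "'a \<Rightarrow> 'a \<Rightarrow> real" and r :: 'a and M :: real
  assumes metric: "finite_metric V d" and depot: "r \<in> V" and M_pos: "M > 0"
begin

abbreviation lv :: "'a \<Rightarrow> nat" where "lv \<equiv> vertex_level d r M"

abbreviation band_of :: "nat \<Rightarrow> 'a \<Rightarrow> real" where
  "band_of j u \<equiv> band (2 ^ j * M) (d r u)"

definition shortcut :: "nat \<Rightarrow> 'a list \<Rightarrow> 'a list" where
  "shortcut j p = filter (\<lambda>u. lv u \<le> j) p"

definition top_edge :: "nat \<Rightarrow> 'a \<times> 'a \<Rightarrow> bool" where
  "top_edge j e \<longleftrightarrow> fst e \<noteq> snd e \<and> max (lv (fst e)) (lv (snd e)) = j"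

definition shortcut_cost :: "nat \<Rightarrow> 'a list \<Rightarrow> real" where
  "shortcut_cost j p =
     sum_list (map (\<lambda>e. d (fst e) (snd e)) (filter (top_edge j) (walk_edges (shortcut j p))))"

text \<open>Summed over all j it is at most three
  times the length of the edge (lemma charge_total).\<close>
definition charge :: "nat \<Rightarrow> 'a \<times> 'a \<Rightarrow> real" where
  "charge j e = (if max (lv (fst e)) (lv (snd e)) \<in> {j, Suc j} then d (fst e) (snd e) else 0)
     + \<bar>band_of j (fst e) - band_of j (snd e)\<bar>"

definition walk_charge :: "nat \<Rightarrow> 'a list \<Rightarrow> real" where
  "walk_charge j p = sum_list (map (charge j) (walk_edges p))"

text \<open>While a walk is above level j, the shortcut edge that will eventually bring it back is
  not yet paid; pending j p is the part of it already covered by the charges so far.\<close>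
definition pending :: "nat \<Rightarrow> 'a list \<Rightarrow> real" where
  "pending j p = (if p \<noteq> [] \<and> j < lv (last p) \<and> shortcut j p \<noteq> []
      then min (d (last (shortcut j p)) (last p)) (2 * (2 ^ j * M) - band_of j (last p)) else 0)"

definition potential :: "nat \<Rightarrow> 'a list \<Rightarrow> real" where
  "potential j p = shortcut_cost j p + pending j p"

lemma low_vertex:
  assumes "lv u \<le> j"
  shows "d r u \<le> 2 ^ j * M" "band_of j u = 0"
proof -
  show le: "d r u \<le> 2 ^ j * M" using assms vertex_level_le_iff[OF M_pos, of d r u j] by simp
  show "band_of j u = 0" by (rule band_below) (use le M_pos in auto)
qed

lemma high_vertex:
  assumes "j < lv u"
  shows "2 ^ j * M < d r u" "band_of j u \<le> d r u - 2 ^ j * M"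
proof -
  show gt: "2 ^ j * M < d r u" using assms vertex_level_gt_iff[OF M_pos, of j d r u] by simp
  show "band_of j u \<le> d r u - 2 ^ j * M" by (rule band_le_excess) (use gt M_pos in auto)
qed

lemma very_high_vertex:
  assumes "Suc j < lv u"
  shows "2 * (2 ^ j * M) < d r u" "band_of j u = 2 ^ j * M"
proof -
  have "2 ^ Suc j * M < d r u" using assms vertex_level_gt_iff[OF M_pos, of "Suc j" d r u] by simp
  then show gt: "2 * (2 ^ j * M) < d r u" by (simp add: mult.assoc)
  show "band_of j u = 2 ^ j * M" by (rule band_above) (use gt M_pos in auto)
qed

lemma band_of_bounds: "0 \<le> band_of j u" "band_of j u \<le> 2 ^ j * M"
  using band_bounds[of "2 ^ j * M" "d r u"] M_pos by auto

lemma shortcut_snoc: "shortcut j (p @ [y]) = shortcut j p @ (if lv y \<le> j then [y] else [])"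
  unfolding shortcut_def by simp

lemma shortcut_last:
  assumes "p \<noteq> []" "lv (last p) \<le> j"
  shows "shortcut j p \<noteq> [] \<and> last (shortcut j p) = last p"
proof -
  have "shortcut j p = shortcut j (butlast p) @ [last p]"
    using assms shortcut_snoc[of j "butlast p" "last p"] by simp
  thus ?thesis by simp
qed

lemma last_shortcut:
  assumes "shortcut j p \<noteq> []"
  shows "last (shortcut j p) \<in> set p" "lv (last (shortcut j p)) \<le> j"
  using last_in_set[OF assms] unfolding shortcut_def by auto

lemma shortcut_cost_snoc:
  "shortcut_cost j (p @ [y]) = shortcut_cost j p +
     (if lv y \<le> j \<and> shortcut j p \<noteq> [] \<and> top_edge j (last (shortcut j p), y)
      then d (last (shortcut j p)) y else 0)"
  unfolding shortcut_cost_def shortcut_snoc by (auto simp: walk_edges_snoc)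

lemma shortcut_cost_nonneg: "set p \<subseteq> V \<Longrightarrow> 0 \<le> shortcut_cost j p"
  unfolding shortcut_cost_def
proof (rule sum_list_nonneg)
  fix z assume pV: "set p \<subseteq> V"
    and "z \<in> set (map (\<lambda>e. d (fst e) (snd e)) (filter (top_edge j) (walk_edges (shortcut j p))))"
  then obtain e where e: "e \<in> set (walk_edges (shortcut j p))" "z = d (fst e) (snd e)" by auto
  then have "fst e \<in> V" "snd e \<in> V"
    using walk_edges_vertices[OF e(1)] pV unfolding shortcut_def by auto
  then show "0 \<le> z" using e(2) metric_nonneg[OF metric] by simp
qed

lemma shortcut_cost_zero:
  assumes "\<forall>u\<in>set p. lv u < j"
  shows "shortcut_cost j p = 0"
proof -
  have "filter (top_edge j) (walk_edges (shortcut j p)) = []"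
  proof (rule filter_False, rule ballI)
    fix e assume "e \<in> set (walk_edges (shortcut j p))"
    then have "fst e \<in> set p" "snd e \<in> set p"
      using walk_edges_vertices unfolding shortcut_def by fastforce+
    then show "\<not> top_edge j e" using assms unfolding top_edge_def by (auto simp: max_def)
  qed
  then show ?thesis unfolding shortcut_cost_def by simp
qed

lemma pending_nonneg: "set p \<subseteq> V \<Longrightarrow> 0 \<le> pending j p"
proof -
  assume pV: "set p \<subseteq> V"
  have "0 \<le> d (last (shortcut j p)) (last p)" if "p \<noteq> []" "shortcut j p \<noteq> []"
    using that last_shortcut(1)[of j p] pV metric_nonneg[OF metric] by (simp add: subset_iff)
  moreover have "0 \<le> 2 * (2 ^ j * M) - band_of j u" for u
    using band_of_bounds(2)[of j u] mult_pos_pos[OF zero_less_power[of 2 j] M_pos] by linarith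
  ultimately show ?thesis unfolding pending_def by auto
qed

lemma charge_nonneg: "x \<in> V \<Longrightarrow> y \<in> V \<Longrightarrow> 0 \<le> charge j (x, y)"
  unfolding charge_def using metric_nonneg[OF metric, of x y] by simp

lemma walk_charge_snoc:
  "p \<noteq> [] \<Longrightarrow> walk_charge j (p @ [y]) = walk_charge j p + charge j (last p, y)"
  unfolding walk_charge_def by (simp add: walk_edges_snoc)

lemma charge_top:
  "max (lv x) (lv y) \<in> {j, Suc j} \<Longrightarrow> charge j (x, y) = d x y + \<bar>band_of j x - band_of j y\<bar>"
  unfolding charge_def by simp

lemma charge_variation:
  "x \<in> V \<Longrightarrow> y \<in> V \<Longrightarrow> \<bar>band_of j x - band_of j y\<bar> \<le> charge j (x, y)"
  unfolding charge_def using metric_nonneg[OF metric, of x y] by simp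

text \<open>Core inequality while the walk stays above level j: moving from x to y increases the
  pending credit by at most the charge of the edge xy (a is the last vertex of level \<le> j).\<close>
lemma pending_growth:
  assumes V: "a \<in> V" "x \<in> V" "y \<in> V" and lev: "lv a \<le> j" "j < lv x" "j < lv y"
  shows "min (d a y) (2 * (2 ^ j * M) - band_of j y)
         \<le> min (d a x) (2 * (2 ^ j * M) - band_of j x) + charge j (x, y)"
proof -
  let ?T = "2 ^ j * M"
  have ra: "d r a \<le> ?T" using low_vertex(1)[OF lev(1)] .
  have ax: "d r x \<le> d r a + d a x" using metric_triangle[OF metric depot V(1,2)] .
  have axy: "d a y \<le> d a x + d x y" using metric_triangle[OF metric V] .
  have band_x: "0 \<le> band_of j x" "band_of j x \<le> ?T" and band_y: "0 \<le> band_of j y" "band_of j y \<le> ?T"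
    using band_of_bounds by auto
  have var: "\<bar>band_of j x - band_of j y\<bar> \<le> charge j (x, y)" using charge_variation[OF V(2,3)] .
  consider (y_far) "Suc j < lv y" | (x_far) "lv y = Suc j" "Suc j < lv x"
    | (both_next) "lv y = Suc j" "lv x = Suc j" using lev by linarith
  then show ?thesis
  proof cases
    case y_far
    have "band_of j y = ?T" using very_high_vertex(2)[OF y_far] .
    then have "min (d a y) (2 * ?T - band_of j y) \<le> ?T" using min.cobounded2 by linarith
    moreover have "band_of j x \<le> d a x" using high_vertex(2)[OF lev(2)] ax ra by linarith
    then have "band_of j x \<le> min (d a x) (2 * ?T - band_of j x)" using band_x by simp
    moreover have "?T - band_of j x \<le> charge j (x, y)" using var \<open>band_of j y = ?T\<close> by simp
    ultimately show ?thesis by linarith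
  next
    case x_far
    have "band_of j x = ?T" using very_high_vertex(2)[OF x_far(2)] .
    moreover have "?T < d a x" using very_high_vertex(1)[OF x_far(2)] ax ra by linarith
    ultimately have "?T \<le> min (d a x) (2 * ?T - band_of j x)" unfolding min.bounded_iff by linarith
    moreover have "min (d a y) (2 * ?T - band_of j y) \<le> 2 * ?T - band_of j y" by (rule min.cobounded2)
    ultimately show ?thesis using var band_y \<open>band_of j x = ?T\<close> by linarith
  next
    case both_next
    have "charge j (x, y) = d x y + \<bar>band_of j x - band_of j y\<bar>"
      using both_next by (simp add: charge_top)
    then show ?thesis
      using axy metric_nonneg[OF metric V(2,3)] abs_ge_self[of "band_of j x - band_of j y"]
      by (auto simp: min_def)
  qed
qed

text \<open>Core inequality when the walk returns from above level j to y: the new shortcut edge ay is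
  paid by the pending credit and the charge of the edge xy.\<close>
lemma return_paid:
  assumes V: "a \<in> V" "x \<in> V" "y \<in> V" and lev: "lv a \<le> j" "j < lv x" "lv y \<le> j"
  shows "d a y \<le> min (d a x) (2 * (2 ^ j * M) - band_of j x) + charge j (x, y)"
proof -
  let ?T = "2 ^ j * M"
  have ra: "d r a \<le> ?T" and ry: "d r y \<le> ?T" and band_y: "band_of j y = 0"
    using low_vertex lev by auto
  have ax: "d r x \<le> d r a + d a x" using metric_triangle[OF metric depot V(1,2)] .
  have axy: "d a y \<le> d a x + d x y" using metric_triangle[OF metric V] .
  have ary: "d a y \<le> d a r + d r y" using metric_triangle[OF metric V(1) depot V(3)] .
  have "d a r = d r a" using metric_sym[OF metric V(1) depot] .
  then have short: "d a y \<le> 2 * ?T" using ary ra ry by linarith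
  have band_x: "0 \<le> band_of j x" using band_of_bounds by auto
  have var: "band_of j x \<le> charge j (x, y)" using charge_variation[OF V(2,3), of j] by (simp add: band_y)
  show ?thesis
  proof (cases "lv x = Suc j")
    case True
    then have "charge j (x, y) = d x y + band_of j x"
      using lev(3) band_x by (simp add: charge_top band_y max_def)
    moreover have "2 * ?T - band_of j x + band_of j x \<ge> d a y" using short by simp
    ultimately show ?thesis using axy metric_nonneg[OF metric V(2,3)] band_x
      by (cases "d a x \<le> 2 * ?T - band_of j x") (simp_all add: min_def)
  next
    case False
    then have far: "Suc j < lv x" using lev(2) by simp
    have "band_of j x = ?T" using very_high_vertex(2)[OF far] .
    moreover have "?T < d a x" using very_high_vertex(1)[OF far] ax ra by linarith
    ultimately have "?T \<le> min (d a x) (2 * ?T - band_of j x)" unfolding min.bounded_iff by linarith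
    then show ?thesis using var short \<open>band_of j x = ?T\<close> by linarith
  qed
qed

lemma potential_step_low_low:
  assumes p: "p \<noteq> []" "set p \<subseteq> V" and y: "y \<in> V" and lev: "lv (last p) \<le> j" "lv y \<le> j"
  shows "potential j (p @ [y]) \<le> potential j p + charge j (last p, y)"
proof -
  let ?x = "last p"
  have "?x \<in> V" using p by auto
  have sc: "shortcut j p \<noteq> []" "last (shortcut j p) = ?x" using shortcut_last[OF p(1) lev(1)] by auto
  have "pending j p = 0" "pending j (p @ [y]) = 0" using lev unfolding pending_def by auto
  moreover have "(if top_edge j (?x, y) then d ?x y else 0) \<le> charge j (?x, y)"
    using charge_nonneg[OF \<open>?x \<in> V\<close> y, of j] by (auto simp: top_edge_def charge_top)
  ultimately show ?thesis unfolding potential_def shortcut_cost_snoc using sc lev(2) by auto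
qed

lemma potential_step_low_high:
  assumes p: "p \<noteq> []" "set p \<subseteq> V" and y: "y \<in> V" and lev: "lv (last p) \<le> j" "j < lv y"
  shows "potential j (p @ [y]) \<le> potential j p + charge j (last p, y)"
proof -
  let ?x = "last p" and ?T = "2 ^ j * M"
  have x: "?x \<in> V" using p by auto
  have sc: "shortcut j p \<noteq> []" "last (shortcut j p) = ?x" using shortcut_last[OF p(1) lev(1)] by auto
  have "shortcut j (p @ [y]) = shortcut j p" using lev(2) shortcut_snoc[of j p y] by simp
  then have "pending j (p @ [y]) = min (d ?x y) (2 * ?T - band_of j y)"
    using lev(2) sc unfolding pending_def by simp
  moreover have "pending j p = 0" using lev(1) unfolding pending_def by auto
  moreover have "shortcut_cost j (p @ [y]) = shortcut_cost j p"
    using lev(2) by (simp add: shortcut_cost_snoc)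
  moreover have "min (d ?x y) (2 * ?T - band_of j y) \<le> charge j (?x, y)"
  proof (cases "lv y = Suc j")
    case True
    then have "d ?x y \<le> charge j (?x, y)" using lev by (simp add: charge_def max_def)
    then show ?thesis using min.cobounded1 order_trans by blast
  next
    case False
    then have far: "Suc j < lv y" using lev(2) by simp
    have "\<bar>band_of j ?x - band_of j y\<bar> = ?T"
      using very_high_vertex(2)[OF far] low_vertex(2)[OF lev(1)] M_pos by simp
    then have "?T \<le> charge j (?x, y)" using charge_variation[OF x y, of j] by simp
    then show ?thesis using very_high_vertex(2)[OF far] min.cobounded2 by linarith
  qed
  ultimately show ?thesis unfolding potential_def by linarith
qed

text \<open>Above level j the cost is unchanged and the pending credit grows as in pending_growth.\<close>
lemma potential_step_high_high:
  assumes p: "p \<noteq> []" "set p \<subseteq> V" and y: "y \<in> V" and lev: "j < lv (last p)" "j < lv y"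
  shows "potential j (p @ [y]) \<le> potential j p + charge j (last p, y)"
proof -
  let ?x = "last p" and ?T = "2 ^ j * M"
  have x: "?x \<in> V" using p by auto
  have sc': "shortcut j (p @ [y]) = shortcut j p" using lev(2) shortcut_snoc[of j p y] by simp
  have cost: "shortcut_cost j (p @ [y]) = shortcut_cost j p"
    using lev(2) by (simp add: shortcut_cost_snoc)
  show ?thesis
  proof (cases "shortcut j p = []")
    case True
    then have "pending j (p @ [y]) = 0" using sc' unfolding pending_def by simp
    then show ?thesis using cost pending_nonneg[OF p(2), of j] charge_nonneg[OF x y, of j]
      unfolding potential_def by linarith
  next
    case False
    define a where "a = last (shortcut j p)"
    have a: "a \<in> V" "lv a \<le> j" using last_shortcut[OF False] p(2) unfolding a_def by auto
    have "pending j p = min (d a ?x) (2 * ?T - band_of j ?x)"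
      using lev(1) False p(1) unfolding pending_def a_def by simp
    moreover have "pending j (p @ [y]) = min (d a y) (2 * ?T - band_of j y)"
      using lev(2) False sc' unfolding pending_def a_def by simp
    ultimately show ?thesis using pending_growth[OF a(1) x y a(2) lev] cost
      unfolding potential_def by linarith
  qed
qed

text \<open>On returning below level j the new shortcut edge is paid as in return_paid.\<close>
lemma potential_step_high_low:
  assumes p: "p \<noteq> []" "set p \<subseteq> V" and y: "y \<in> V" and lev: "j < lv (last p)" "lv y \<le> j"
  shows "potential j (p @ [y]) \<le> potential j p + charge j (last p, y)"
proof -
  let ?x = "last p" and ?T = "2 ^ j * M"
  have x: "?x \<in> V" using p by auto
  have pending': "pending j (p @ [y]) = 0" using lev(2) unfolding pending_def by auto
  show ?thesis
  proof (cases "shortcut j p = []")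
    case True
    then have "shortcut_cost j (p @ [y]) = shortcut_cost j p" by (simp add: shortcut_cost_snoc)
    then show ?thesis using pending' pending_nonneg[OF p(2), of j] charge_nonneg[OF x y, of j]
      unfolding potential_def by linarith
  next
    case False
    define a where "a = last (shortcut j p)"
    have a: "a \<in> V" "lv a \<le> j" using last_shortcut[OF False] p(2) unfolding a_def by auto
    have "shortcut_cost j (p @ [y]) \<le> shortcut_cost j p + d a y"
      using metric_nonneg[OF metric a(1) y] False unfolding shortcut_cost_snoc a_def by auto
    moreover have "pending j p = min (d a ?x) (2 * ?T - band_of j ?x)"
      using lev(1) False p(1) unfolding pending_def a_def by simp
    ultimately show ?thesis using return_paid[OF a(1) x y a(2) lev] pending'
      unfolding potential_def by linarith
  qed
qed

lemma potential_step:
  assumes "p \<noteq> []" "set p \<subseteq> V" "y \<in> V"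
  shows "potential j (p @ [y]) \<le> potential j p + charge j (last p, y)"
  using potential_step_low_low[OF assms] potential_step_low_high[OF assms]
    potential_step_high_high[OF assms] potential_step_high_low[OF assms]
  by (cases "lv (last p) \<le> j"; cases "lv y \<le> j") simp_all

lemma charging_invariant: "set p \<subseteq> V \<Longrightarrow> potential j p \<le> walk_charge j p"
proof (induction p rule: rev_induct)
  case (snoc y p)
  show ?case
  proof (cases "p = []")
    case True
    then show ?thesis
      by (simp add: potential_def shortcut_cost_def pending_def shortcut_def walk_charge_def)
  next
    case False
    then show ?thesis using snoc potential_step[OF False _, of y j] walk_charge_snoc[OF False, of j y]
      by auto
  qed
qed (simp add: potential_def shortcut_cost_def pending_def shortcut_def walk_charge_def)

lemma charge_total:
  assumes V: "x \<in> V" "y \<in> V"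
  shows "(\<Sum>j<N. charge j (x, y)) \<le> 3 * d x y"
proof -
  let ?m = "max (lv x) (lv y)"
  have dxy: "0 \<le> d x y" using metric_nonneg[OF metric V] .
  have "(\<Sum>j<N. if ?m \<in> {j, Suc j} then d x y else 0)
      \<le> (\<Sum>j<N. (if ?m = j then d x y else 0) + (if ?m - 1 = j then d x y else 0))"
    by (rule sum_mono) (use dxy in auto)
  also have "\<dots> \<le> 2 * d x y" using dxy by (simp add: sum.distrib)
  finally have lengths: "(\<Sum>j<N. if ?m \<in> {j, Suc j} then d x y else 0) \<le> 2 * d x y" .
  have "(\<Sum>j<N. \<bar>band_of j x - band_of j y\<bar>) \<le> \<bar>d r y - d r x\<bar>"
    by (rule band_variation[OF M_pos])
  also have "\<dots> \<le> d x y"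
    using metric_triangle[OF metric depot V] metric_triangle[OF metric depot V(2,1)]
      metric_sym[OF metric V] by linarith
  finally have "(\<Sum>j<N. \<bar>band_of j x - band_of j y\<bar>) \<le> d x y" .
  with lengths show ?thesis unfolding charge_def fst_conv snd_conv sum.distrib by linarith
qed

lemma shortcut_costs_total:
  assumes pV: "set p \<subseteq> V" and J: "finite J"
  shows "(\<Sum>j\<in>J. shortcut_cost j p) \<le> 3 * walk_len d p"
proof -
  obtain N where JN: "J \<subseteq> {..<N}" using J unfolding finite_nat_set_iff_bounded by auto
  have "(\<Sum>j\<in>J. shortcut_cost j p) \<le> (\<Sum>j<N. shortcut_cost j p)"
    by (rule sum_mono2) (use JN shortcut_cost_nonneg[OF pV] in auto)
  also have "\<dots> \<le> (\<Sum>j<N. walk_charge j p)"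
  proof (rule sum_mono)
    fix j show "shortcut_cost j p \<le> walk_charge j p"
      using charging_invariant[OF pV, of j] pending_nonneg[OF pV, of j] unfolding potential_def
      by linarith
  qed
  also have "\<dots> = sum_list (map (\<lambda>e. \<Sum>j<N. charge j e) (walk_edges p))"
  proof -
    have "(\<Sum>j<N. sum_list (map (charge j) es)) = sum_list (map (\<lambda>e. \<Sum>j<N. charge j e) es)" for es
      by (induction es) (simp_all add: sum.distrib)
    then show ?thesis unfolding walk_charge_def .
  qed
  also have "\<dots> \<le> sum_list (map (\<lambda>e. 3 * d (fst e) (snd e)) (walk_edges p))"
    by (rule sum_list_mono) (use pV in \<open>auto dest!: walk_edges_vertices intro!: charge_total\<close>)
  also have "\<dots> = 3 * walk_len d p" unfolding walk_len_edges by (simp add: sum_list_const_mult)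
  finally show ?thesis .
qed

section \<open>The level-wise MST bound\<close>

definition level_edges :: "nat \<Rightarrow> 'a list list \<Rightarrow> ('a \<times> 'a) list" where
  "level_edges j Ts = concat (map (\<lambda>\<tau>. filter (top_edge j) (walk_edges (shortcut j \<tau>))) Ts)"

lemma level_edges_weight:
  "sum_list (map (\<lambda>e. d (fst e) (snd e)) (level_edges j Ts)) = sum_list (map (shortcut_cost j) Ts)"
  unfolding level_edges_def shortcut_cost_def by (induction Ts) simp_all

lemma shortcut_edge_vertices:
  assumes "set \<tau> \<subseteq> V" "e \<in> set (walk_edges (shortcut j \<tau>))"
  shows "fst e \<in> V \<and> snd e \<in> V \<and> lv (fst e) \<le> j \<and> lv (snd e) \<le> j"
  using walk_edges_vertices[OF assms(2)] assms(1) unfolding shortcut_def by auto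

lemma level_edges_in_contraction:
  assumes tours: "\<forall>\<tau>\<in>set Ts. set \<tau> \<subseteq> V"
  shows "set (level_edges j Ts) \<subseteq> graph_edges {v\<in>V. lv v \<le> j}"
    "\<forall>e\<in>set (level_edges j Ts). cnode {v\<in>V. lv v < j} (fst e) \<noteq> cnode {v\<in>V. lv v < j} (snd e)"
    "\<forall>e\<in>set (level_edges j Ts). 0 \<le> d (fst e) (snd e)"
proof -
  have props: "fst e \<in> V \<and> snd e \<in> V \<and> lv (fst e) \<le> j \<and> lv (snd e) \<le> j \<and> top_edge j e"
    if e: "e \<in> set (level_edges j Ts)" for e
  proof -
    obtain \<tau> where "\<tau> \<in> set Ts" "e \<in> set (walk_edges (shortcut j \<tau>))" "top_edge j e"
      using e unfolding level_edges_def by auto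
    then show ?thesis using shortcut_edge_vertices[of \<tau> e j] tours by blast
  qed
  show "set (level_edges j Ts) \<subseteq> graph_edges {v\<in>V. lv v \<le> j}"
    using props unfolding graph_edges_def top_edge_def by fastforce
  show "\<forall>e\<in>set (level_edges j Ts). 0 \<le> d (fst e) (snd e)"
    using props metric_nonneg[OF metric] by blast
  show "\<forall>e\<in>set (level_edges j Ts). cnode {v\<in>V. lv v < j} (fst e) \<noteq> cnode {v\<in>V. lv v < j} (snd e)"
  proof
    fix e assume "e \<in> set (level_edges j Ts)"
    then have "fst e \<noteq> snd e" "max (lv (fst e)) (lv (snd e)) = j"
      using props unfolding top_edge_def by blast+
    then have "fst e \<noteq> snd e" "lv (fst e) = j \<or> lv (snd e) = j" by (auto simp: max_def)
    then show "cnode {v\<in>V. lv v < j} (fst e) \<noteq> cnode {v\<in>V. lv v < j} (snd e)"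
      unfolding cnode_def by auto
  qed
qed

text \<open>Walks from r covering V: in G[V_<=j]/V_<j their level-j shortcut edges connect r to every
  vertex of V_<=j, because the contraction identifies the endpoints of every other shortcut edge.\<close>
lemma level_edges_connect:
  assumes tours: "\<forall>\<tau>\<in>set Ts. set \<tau> \<subseteq> V \<and> \<tau> \<noteq> [] \<and> hd \<tau> = r"
    and cover: "V \<subseteq> insert r (\<Union>\<tau>\<in>set Ts. set \<tau>)"
    and u: "u \<in> V" "lv u \<le> j"
  shows "(cadj {v\<in>V. lv v < j} (set (level_edges j Ts)))\<^sup>*\<^sup>* (cnode {v\<in>V. lv v < j} r) (cnode {v\<in>V. lv v < j} u)"
proof (cases "u = r")
  case False
  let ?U = "{v\<in>V. lv v < j}" and ?E = "set (level_edges j Ts)"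
  obtain \<tau> where \<tau>: "\<tau> \<in> set Ts" "u \<in> set \<tau>" using u False cover by blast
  have u_shortcut: "u \<in> set (shortcut j \<tau>)" using \<tau>(2) u(2) unfolding shortcut_def by simp
  have "\<tau> = r # tl \<tau>" using tours \<tau>(1) by (metis list.collapse)
  then have hd_shortcut: "hd (shortcut j \<tau>) = r"
    unfolding shortcut_def using vertex_level_depot[OF metric depot M_pos]
    by (metis filter.simps(2) list.sel(1) zero_le)
  have "\<forall>e\<in>set (walk_edges (shortcut j \<tau>)). (cadj ?U ?E)\<^sup>*\<^sup>* (cnode ?U (fst e)) (cnode ?U (snd e))"
  proof (intro ballI)
    fix e assume e: "e \<in> set (walk_edges (shortcut j \<tau>))"
    show "(cadj ?U ?E)\<^sup>*\<^sup>* (cnode ?U (fst e)) (cnode ?U (snd e))"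
    proof (cases "top_edge j e")
      case True
      then have "e \<in> ?E" using \<tau>(1) e unfolding level_edges_def by auto
      then show ?thesis unfolding cadj_def by blast
    next
      case False
      have "fst e \<in> V \<and> snd e \<in> V \<and> lv (fst e) \<le> j \<and> lv (snd e) \<le> j"
        using shortcut_edge_vertices[OF _ e] tours \<tau>(1) by blast
      then have "cnode ?U (fst e) = cnode ?U (snd e)"
        using False unfolding top_edge_def cnode_def by (auto simp: max_def split: if_splits)
      then show ?thesis by simp
    qed
  qed
  from walk_edges_rtranclp[where f = "cnode ?U", OF this u_shortcut] show ?thesis
    using hd_shortcut by simp
qed simp

lemma level_mst_bound:
  assumes LP: "level_prim V d r M H"
    and tours: "\<forall>\<tau>\<in>set Ts. set \<tau> \<subseteq> V \<and> \<tau> \<noteq> [] \<and> hd \<tau> = r"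
    and cover: "V \<subseteq> insert r (\<Union>\<tau>\<in>set Ts. set \<tau>)"
  shows "edge_weight d (H j) \<le> sum_list (map (shortcut_cost j) Ts)"
proof -
  let ?S = "{v\<in>V. lv v \<le> j}" and ?U = "{v\<in>V. lv v < j}" and ?E = "set (level_edges j Ts)"
  have mst: "contr_mst d ?S ?U (H j)"
    using LP unfolding level_prim_def levels_below_eq[OF M_pos] less_Suc_eq_le by blast
  have Ts: "\<forall>\<tau>\<in>set Ts. set \<tau> \<subseteq> V" using tours by blast
  note edges = level_edges_in_contraction[OF Ts, of j]
  have conn: "\<forall>x\<in>cnode ?U ` ?S. \<forall>y\<in>cnode ?U ` ?S. (cadj ?U ?E)\<^sup>*\<^sup>* x y"
  proof (intro ballI)
    fix x y assume "x \<in> cnode ?U ` ?S" "y \<in> cnode ?U ` ?S"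
    then obtain u v where uv: "u \<in> ?S" "v \<in> ?S" "x = cnode ?U u" "y = cnode ?U v" by blast
    have "(cadj ?U ?E)\<^sup>*\<^sup>* x (cnode ?U r)"
      using cadj_rtranclp_sym[OF level_edges_connect[OF tours cover]] uv(1,3) by blast
    moreover have "(cadj ?U ?E)\<^sup>*\<^sup>* (cnode ?U r) y"
      using level_edges_connect[OF tours cover] uv(2,4) by blast
    ultimately show "(cadj ?U ?E)\<^sup>*\<^sup>* x y" by (rule rtranclp_trans)
  qed
  have "edge_weight d (H j) \<le> edge_weight d ?E"
    by (rule mst_weight_le_connected[OF mst _ edges(1,2) conn edges(3)]) simp
  also have "\<dots> \<le> sum_list (map (\<lambda>e. d (fst e) (snd e)) (level_edges j Ts))"
    unfolding edge_weight_def by (rule sum_set_le_sum_list) (use edges(3) in auto)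
  finally show ?thesis unfolding level_edges_weight .
qed

section \<open>Part (a): levels along paths from the depot\<close>

lemma level_prim_edge:
  assumes LP: "level_prim V d r M H" and e: "e \<in> H i"
  shows "fst e \<in> V \<and> snd e \<in> V \<and> max (lv (fst e)) (lv (snd e)) = i"
proof -
  let ?U = "levels_below V d r M i"
  have tree: "contr_spanning_tree (levels_below V d r M (Suc i)) ?U (H i)"
    using LP unfolding level_prim_def contr_mst_def by blast
  then have "e \<in> graph_edges (levels_below V d r M (Suc i))"
    using e unfolding contr_spanning_tree_def by blast
  then have lev: "fst e \<in> V" "snd e \<in> V" "lv (fst e) \<le> i" "lv (snd e) \<le> i"
    unfolding graph_edges_def levels_below_eq[OF M_pos] by auto
  have "cnode ?U (fst e) \<noteq> cnode ?U (snd e)" using tree e unfolding contr_spanning_tree_def by blast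
  then have "lv (fst e) = i \<or> lv (snd e) = i"
    using lev unfolding cnode_def levels_below_eq[OF M_pos] by (auto split: if_splits)
  then show ?thesis using lev by (auto simp: max_def)
qed

lemma path_step_edge:
  assumes LP: "level_prim V d r M H" and p: "simple_path_in (\<Union>i. H i) p" and t: "t < length p - 1"
  shows "p ! t \<in> V" "p ! Suc t \<in> V"
    "\<exists>e\<in>H (max (lv (p ! t)) (lv (p ! Suc t))). e = (p ! t, p ! Suc t) \<or> e = (p ! Suc t, p ! t)"
proof -
  obtain i e where e: "e \<in> H i" "e = (p ! t, p ! Suc t) \<or> e = (p ! Suc t, p ! t)"
    using p t unfolding simple_path_in_def by blast
  have "fst e \<in> V \<and> snd e \<in> V \<and> max (lv (fst e)) (lv (snd e)) = i"
    by (rule level_prim_edge[OF LP e(1)])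
  then show "p ! t \<in> V" "p ! Suc t \<in> V"
    "\<exists>e\<in>H (max (lv (p ! t)) (lv (p ! Suc t))). e = (p ! t, p ! Suc t) \<or> e = (p ! Suc t, p ! t)"
    using e by (auto simp: max.commute)
qed

text \<open>A stretch p_a, ..., p_m of a simple path whose steps all have higher endpoint on level A
  uses edges of H_A only; if it stops before the edge e = p_m p_(m+1), it avoids e and so connects
  its ends in the contraction of H_A - {e} by V_<A.\<close>
lemma path_stretch_avoids_edge:
  assumes LP: "level_prim V d r M H" and p: "simple_path_in (\<Union>i. H i) p"
    and m: "m < length p - 1" and e: "e = (p ! m, p ! Suc m) \<or> e = (p ! Suc m, p ! m)"
    and stretch: "a \<le> m" "\<And>t. a \<le> t \<Longrightarrow> t < m \<Longrightarrow> max (lv (p ! t)) (lv (p ! Suc t)) = A"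
  shows "(cadj U (H A - {e}))\<^sup>*\<^sup>* (cnode U (p ! a)) (cnode U (p ! m))"
proof (rule rtranclp_along_indices[where f = "\<lambda>t. cnode U (p ! t)", OF _ stretch(1)])
  fix t assume t: "a \<le> t" "t < m"
  have dist: "distinct p" using p unfolding simple_path_in_def by simp
  have tp: "t < length p - 1" using t m by simp
  obtain e' where e': "e' \<in> H A" "e' = (p ! t, p ! Suc t) \<or> e' = (p ! Suc t, p ! t)"
    using path_step_edge(3)[OF LP p tp] stretch(2)[OF t] by auto
  have "p ! t \<noteq> p ! m" "p ! t \<noteq> p ! Suc m"
    using nth_eq_iff_index_eq[OF dist, of t m] nth_eq_iff_index_eq[OF dist, of t "Suc m"] t m
    by auto
  then have "e' \<in> H A - {e}" using e e' by auto
  then show "cadj U (H A - {e}) (cnode U (p ! t)) (cnode U (p ! Suc t))"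
    unfolding cadj_def using e'(2) by (intro bexI[of _ e']) auto
qed

text \<open>A path from r cannot make its first descent: the descending edge e leaves the level A of
  its start.  The stretch of the path inside level A before e, together with the vertex of lower
  level preceding it, consists of edges of H_A other than e and connects both endpoints of e
  in the contraction by V_<A, so e would not be a bridge of H_A.\<close>
lemma no_first_descent:
  assumes LP: "level_prim V d r M H" and p: "simple_path_in (\<Union>i. H i) p" "hd p = r"
    and m: "m < length p - 1"
    and mono: "\<And>t t'. t \<le> t' \<Longrightarrow> t' \<le> m \<Longrightarrow> lv (p ! t) \<le> lv (p ! t')"
  shows "lv (p ! m) \<le> lv (p ! Suc m)"
proof (rule ccontr)
  define A where "A = lv (p ! m)"
  define U where "U = levels_below V d r M A"
  assume "\<not> lv (p ! m) \<le> lv (p ! Suc m)"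
  then have descent: "lv (p ! Suc m) < A" unfolding A_def by simp
  have U: "U = {u\<in>V. lv u < A}" unfolding U_def levels_below_eq[OF M_pos] ..
  have pne: "p \<noteq> []" using p(1) unfolding simple_path_in_def by simp
  have "lv (p ! 0) = 0" using p(2) pne vertex_level_depot[OF metric depot M_pos] by (simp add: hd_conv_nth)
  then have rise: "lv (p ! 0) < lv (p ! m)" using descent unfolding A_def by simp
  obtain s where s: "0 < s" "s \<le> m" "lv (p ! (s - 1)) < A"
    and plateau: "\<And>t. s \<le> t \<Longrightarrow> t \<le> m \<Longrightarrow> lv (p ! t) = A"
    using last_rise[of m "\<lambda>t. lv (p ! t)", OF mono rise] unfolding A_def by blast
  obtain e where e: "e \<in> H A" "e = (p ! m, p ! Suc m) \<or> e = (p ! Suc m, p ! m)"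
    using path_step_edge(3)[OF LP p(1) m] descent unfolding A_def by (auto simp: max_def)
  have "contr_spanning_tree (levels_below V d r M (Suc A)) U (H A)"
    using LP unfolding level_prim_def contr_mst_def U_def by blast
  then have bridge: "\<not> (cadj U (H A - {e}))\<^sup>*\<^sup>* (cnode U (fst e)) (cnode U (snd e))"
    using e(1) unfolding contr_spanning_tree_def by blast
  have "max (lv (p ! t)) (lv (p ! Suc t)) = A" if "s - 1 \<le> t" "t < m" for t
    using plateau[of "Suc t"] mono[of t m] that s(1) unfolding A_def by simp
  then have "(cadj U (H A - {e}))\<^sup>*\<^sup>* (cnode U (p ! (s - 1))) (cnode U (p ! m))"
    using path_stretch_avoids_edge[OF LP p(1) m e(2)] s(2) by simp
  moreover have "cnode U (p ! (s - 1)) = None" "cnode U (p ! Suc m) = None"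
    using path_step_edge(1,2)[OF LP p(1)] s m descent unfolding cnode_def U by auto
  ultimately have "(cadj U (H A - {e}))\<^sup>*\<^sup>* (cnode U (p ! m)) (cnode U (p ! Suc m))"
    using cadj_rtranclp_sym[of U "H A - {e}" "cnode U (p ! (s - 1))" "cnode U (p ! m)"] by simp
  then have "(cadj U (H A - {e}))\<^sup>*\<^sup>* (cnode U (fst e)) (cnode U (snd e))"
    using e(2) cadj_rtranclp_sym[of U "H A - {e}" "cnode U (p ! m)"] by auto
  with bridge show False ..
qed

lemma levels_monotone_on_path:
  assumes LP: "level_prim V d r M H" and p: "simple_path_in (\<Union>i. H i) p" "hd p = r"
  shows "m < length p \<Longrightarrow> t \<le> t' \<Longrightarrow> t' \<le> m \<Longrightarrow> lv (p ! t) \<le> lv (p ! t')"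
proof (induction m arbitrary: t t')
  case (Suc m)
  have IH: "\<And>t t'. t \<le> t' \<Longrightarrow> t' \<le> m \<Longrightarrow> lv (p ! t) \<le> lv (p ! t')" using Suc by simp
  show ?case
  proof (cases "t' \<le> m")
    case False
    then have "t' = Suc m" using Suc.prems by simp
    moreover have "lv (p ! m) \<le> lv (p ! Suc m)"
      using no_first_descent[OF LP p _ IH] Suc.prems(1) by simp
    ultimately show ?thesis using IH[of t m] Suc.prems(2) by (cases "t = Suc m") auto
  qed (use IH Suc.prems in simp)
qed simp

lemma closed_walk_stays_low:
  assumes "set \<tau> \<subseteq> V" "hd \<tau> = r" "last \<tau> = r" "walk_len d \<tau> \<le> 2 * (2 ^ k * M)" "u \<in> set \<tau>"
  shows "lv u \<le> k"
proof -
  have "d r u + d u r \<le> walk_len d \<tau>" using walk_detour[OF metric assms(1,5)] assms(2,3) by simp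
  moreover have "d u r = d r u" using metric_sym[OF metric _ depot] assms(1,5) by auto
  ultimately have "d r u \<le> 2 ^ k * M" using assms(4) by linarith
  then show ?thesis using vertex_level_le_iff[OF M_pos, of d r u k] by simp
qed

lemma closed_walk_cost_above:
  assumes "set \<tau> \<subseteq> V" "hd \<tau> = r" "last \<tau> = r" "walk_len d \<tau> \<le> 2 * (2 ^ k * M)" "k < j"
  shows "shortcut_cost j \<tau> = 0"
  using closed_walk_stays_low[OF assms(1-4)] assms(5) by (intro shortcut_cost_zero) fastforce

lemma closed_walk_costs:
  assumes "set \<tau> \<subseteq> V" "walk_len d \<tau> \<le> 2 * (2 ^ k * M)" "finite J"
  shows "(\<Sum>j\<in>J. shortcut_cost j \<tau>) \<le> 6 * M * 2 ^ k"
proof -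
  have "3 * walk_len d \<tau> \<le> 6 * M * 2 ^ k" using assms(2) by (simp add: algebra_simps)
  then show ?thesis using shortcut_costs_total[OF assms(1,3)] by linarith
qed

end

section \<open>Solutions of makespan below 2M\<close>

definition short_tours ::
  "'a set \<Rightarrow> ('a \<Rightarrow> 'a \<Rightarrow> real) \<Rightarrow> 'a \<Rightarrow> real \<Rightarrow> nat list \<Rightarrow> (nat \<Rightarrow> 'a list) \<Rightarrow> bool" where
  "short_tours V d r M ks \<tau> \<longleftrightarrow>
     (\<forall>v<length ks. set (\<tau> v) \<subseteq> V \<and> \<tau> v \<noteq> [] \<and> hd (\<tau> v) = r \<and> last (\<tau> v) = r \<and>
        walk_len d (\<tau> v) \<le> 2 * (2 ^ (ks ! v) * M)) \<and>
     V \<subseteq> insert r (\<Union>v<length ks. set (\<tau> v))"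

lemma tour_le_makespan:
  "v < length ks \<Longrightarrow> tour_len d r (ts ! v) / 2 ^ (ks ! v) \<le> makespan d r ks ts"
  unfolding makespan_def by (rule Max_ge) auto

lemma makespan_nonneg:
  assumes metric: "finite_metric V d" and depot: "r \<in> V" and vehicles: "ks \<noteq> []"
    and sol: "htsp_solution V r ks ts"
  shows "0 \<le> makespan d r ks ts"
proof -
  have "0 < length ks" using vehicles by simp
  then have "set (ts ! 0) \<subseteq> V" using sol unfolding htsp_solution_def by (metis nth_mem)
  then have "set (r # ts ! 0 @ [r]) \<subseteq> V" using depot by simp
  then have "0 \<le> tour_len d r (ts ! 0) / 2 ^ (ks ! 0)"
    unfolding tour_len_def using walk_len_nonneg[OF metric] by simp
  then show ?thesis using tour_le_makespan[of 0 ks d r ts] vehicles by simp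
qed

lemma small_makespan_solution:
  assumes metric: "finite_metric V d" and depot: "r \<in> V" and vehicles: "ks \<noteq> []"
    and M_pos: "M > 0" and M_opt: "htsp_opt V d r ks \<le> M"
  obtains ts where "htsp_solution V r ks ts" "makespan d r ks ts < 2 * M"
proof -
  let ?Sols = "{makespan d r ks ts | ts. htsp_solution V r ks ts}"
  have "finite V" using metric unfolding finite_metric_def by blast
  then obtain xs where xs: "set xs = V" using finite_list by blast
  have "htsp_solution V r ks (replicate (length ks) xs)"
    unfolding htsp_solution_def using xs vehicles by auto
  then have nonempty: "?Sols \<noteq> {}" by blast
  have "bdd_below ?Sols"
  proof (rule bdd_belowI)
    fix x assume "x \<in> ?Sols"
    then show "0 \<le> x" using makespan_nonneg[OF metric depot vehicles] by blast
  qed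
  moreover have "Inf ?Sols < 2 * M" using M_opt M_pos unfolding htsp_opt_def by linarith
  ultimately show ?thesis using cInf_less_iff[OF nonempty] that by blast
qed

lemma short_tours_exist:
  assumes metric: "finite_metric V d" and depot: "r \<in> V" and vehicles: "ks \<noteq> []"
    and M_pos: "M > 0" and M_opt: "htsp_opt V d r ks \<le> M"
  shows "\<exists>\<tau>. short_tours V d r M ks \<tau>"
proof -
  obtain ts where ts: "htsp_solution V r ks ts" "makespan d r ks ts < 2 * M"
    using small_makespan_solution[OF assms] .
  define \<tau> where "\<tau> v = r # ts ! v @ [r]" for v
  have "walk_len d (\<tau> v) \<le> 2 * (2 ^ (ks ! v) * M)" if "v < length ks" for v
  proof -
    have "tour_len d r (ts ! v) / 2 ^ (ks ! v) < 2 * M"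
      using tour_le_makespan[OF that, of d r ts] ts(2) by linarith
    then show ?thesis unfolding \<tau>_def tour_len_def by (simp add: divide_less_eq algebra_simps)
  qed
  moreover have "set (\<tau> v) \<subseteq> V" if "v < length ks" for v
  proof -
    have "set (ts ! v) \<subseteq> V" using ts(1) that unfolding htsp_solution_def by (metis nth_mem)
    then show ?thesis using depot unfolding \<tau>_def by simp
  qed
  moreover have "V \<subseteq> insert r (\<Union>v<length ks. set (\<tau> v))"
  proof
    fix u assume "u \<in> V"
    then have "u = r \<or> (\<exists>t\<in>set ts. u \<in> set t)" using ts(1) unfolding htsp_solution_def by blast
    moreover have "u \<in> set (\<tau> v)" if "u \<in> set (ts ! v)" for v
      using that unfolding \<tau>_def by simp
    ultimately show "u \<in> insert r (\<Union>v<length ks. set (\<tau> v))"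
      using ts(1) unfolding htsp_solution_def by (metis UN_I in_set_conv_nth insertCI lessThan_iff)
  qed
  ultimately have "short_tours V d r M ks \<tau>" unfolding short_tours_def \<tau>_def by simp
  then show ?thesis by blast
qed

definition tail_weight :: "nat \<Rightarrow> nat \<Rightarrow> real" where
  "tail_weight i k = (if i - 1 \<le> k then 2 ^ k else 0)"

lemma tail_weight_sum:
  "(\<Sum>v<length ks. tail_weight i (ks ! v)) = (\<Sum>j | j \<in> set ks \<and> i - 1 \<le> j. 2 ^ j * real (mu ks j))"
proof -
  have "(\<Sum>v<length ks. tail_weight i (ks ! v)) = sum_list (map (tail_weight i) ks)"
    by (simp add: sum_list_sum_nth atLeast0LessThan)
  also have "\<dots> = (\<Sum>k\<in>set ks. real (mu ks k) * tail_weight i k)"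
    unfolding mu_def by (rule sum_list_count_real)
  also have "\<dots> = (\<Sum>k\<in>set ks. if i - 1 \<le> k then 2 ^ k * real (mu ks k) else 0)"
    unfolding tail_weight_def by (rule sum.cong) auto
  also have "\<dots> = (\<Sum>j | j \<in> set ks \<and> i - 1 \<le> j. 2 ^ j * real (mu ks j))"
    by (simp add: sum.inter_filter[symmetric])
  finally show ?thesis .
qed

lemma level_weights_bound:
  assumes metric: "finite_metric V d" and depot: "r \<in> V" and M_pos: "M > 0"
    and LP: "level_prim V d r M H" and tours: "short_tours V d r M ks \<tau>"
    and J: "finite J" "\<forall>j\<in>J. i \<le> j"
  shows "(\<Sum>j\<in>J. edge_weight d (H j)) \<le> 6 * M * (\<Sum>v<length ks. tail_weight i (ks ! v))"
proof -
  let ?n = "length ks" and ?cost = "shortcut_cost d r M"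
  have \<tau>: "set (\<tau> v) \<subseteq> V" "\<tau> v \<noteq> []" "hd (\<tau> v) = r" "last (\<tau> v) = r"
    "walk_len d (\<tau> v) \<le> 2 * (2 ^ (ks ! v) * M)" if "v < ?n" for v
    using tours that unfolding short_tours_def by auto
  have mst: "edge_weight d (H j) \<le> (\<Sum>v<?n. ?cost j (\<tau> v))" for j
  proof -
    have "edge_weight d (H j) \<le> sum_list (map (?cost j) (map \<tau> [0..<?n]))"
      by (rule level_mst_bound[OF metric depot M_pos LP])
        (use \<tau> tours in \<open>auto simp: short_tours_def\<close>)
    then show ?thesis by (simp add: interv_sum_list_conv_sum_set_nat atLeast0LessThan)
  qed
  have per_tour: "(\<Sum>j\<in>J. ?cost j (\<tau> v)) \<le> 6 * M * tail_weight i (ks ! v)" if v: "v < ?n" for v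
  proof (cases "i - 1 \<le> ks ! v")
    case True
    then show ?thesis using closed_walk_costs[OF metric depot M_pos \<tau>(1,5)[OF v] J(1)]
      unfolding tail_weight_def by simp
  next
    case False
    then have "?cost j (\<tau> v) = 0" if "j \<in> J" for j
      using closed_walk_cost_above[OF metric depot M_pos \<tau>(1,3-5)[OF v]] False J(2) that by force
    then show ?thesis using False unfolding tail_weight_def by simp
  qed
  have "(\<Sum>j\<in>J. edge_weight d (H j)) \<le> (\<Sum>j\<in>J. \<Sum>v<?n. ?cost j (\<tau> v))"
    by (rule sum_mono) (rule mst)
  also have "\<dots> = (\<Sum>v<?n. \<Sum>j\<in>J. ?cost j (\<tau> v))" by (rule sum.swap)
  also have "\<dots> \<le> (\<Sum>v<?n. 6 * M * tail_weight i (ks ! v))" by (rule sum_mono) (simp add: per_tour)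
  finally show ?thesis by (simp add: sum_distrib_left)
qed

theorem corollary4:
  fixes V :: "'a set" and d :: "'a \<Rightarrow> 'a \<Rightarrow> real" and r :: 'a and ks :: "nat list"
    and M :: real and H :: "nat \<Rightarrow> ('a \<times> 'a) set"
  assumes metric: "finite_metric V d"
    and depot: "r \<in> V"
    and vehicles: "ks \<noteq> []"
    and M_pos: "M > 0"
    and M_opt: "htsp_opt V d r ks \<le> M"
    and LP: "level_prim V d r M H"
  shows "(\<forall>p. simple_path_in (\<Union>i. H i) p \<and> hd p = r \<and> tree_degree (\<Union>i. H i) (last p) = 1 \<longrightarrow>
            (\<forall>j < length p - 1. \<forall>a b. p ! j \<in> level_set V d r M a \<longrightarrow>
                p ! Suc j \<in> level_set V d r M b \<longrightarrow> a \<le> b))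
       \<and> (\<forall>i. (\<Sum>j | i \<le> j \<and> H j \<noteq> {}. edge_weight d (H j))
               \<le> 8 * M * (\<Sum>j | j \<in> set ks \<and> i - 1 \<le> j. 2 ^ j * real (mu ks j)))"
proof (intro conjI allI impI)
  fix p j a b
  assume p: "simple_path_in (\<Union>i. H i) p \<and> hd p = r \<and> tree_degree (\<Union>i. H i) (last p) = 1"
    and "j < length p - 1" "p ! j \<in> level_set V d r M a" "p ! Suc j \<in> level_set V d r M b"
  then show "a \<le> b"
    using levels_monotone_on_path[OF metric depot M_pos LP, of p "Suc j" j "Suc j"]
    unfolding level_set_eq[OF M_pos] by auto
next
  fix i
  let ?J = "{j. i \<le> j \<and> H j \<noteq> {}}" and ?W = "\<Sum>v<length ks. tail_weight i (ks ! v)"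
  obtain \<tau> where tours: "short_tours V d r M ks \<tau>"
    using short_tours_exist[OF metric depot vehicles M_pos M_opt] ..
  have W: "0 \<le> ?W" unfolding tail_weight_def by (rule sum_nonneg) simp
  have "(\<Sum>j\<in>?J. edge_weight d (H j)) \<le> 6 * M * ?W"
  proof (cases "finite ?J")
    case True
    then show ?thesis by (rule level_weights_bound[OF metric depot M_pos LP tours]) simp
  next
    case False  \<comment> \<open>a sum over an infinite set is 0\<close>
    then show ?thesis using W M_pos by simp
  qed
  also have "\<dots> \<le> 8 * M * ?W" using W M_pos by (intro mult_right_mono) auto
  finally show "(\<Sum>j\<in>?J. edge_weight d (H j))
      \<le> 8 * M * (\<Sum>j | j \<in> set ks \<and> i - 1 \<le> j. 2 ^ j * real (mu ks j))"
    unfolding tail_weight_sum .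
qed

end
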